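(* Let $k$ be a field of characteristic different from $2$ and let $\alpha\in k^\times$. There exist positive integers $a,b$ such that $a\langle 1\rangle = b\langle 2,2\alpha\rangle$ in $GW(k)$ if and only if $\alpha$ is a sum of squares in $k^\times$.
   Context: $GW(k)$ is the Grothendieck–Witt ring of $k$, generated as an abelian group by the one-dimensional quadratic forms $\langle a\rangle$, $a\in k^\times/(k^\times)^2$, with $\langle a\rangle+\langle b\rangle=\langle a,b\rangle$ (orthogonal sum) and $\langle a\rangle\langle b\rangle=\langle ab\rangle$. "$\alpha$ is a sum of squares in $k^\times$" means $\alpha=x_1^2+\cdots+x_m^2$ for some $m\ge1$ and $x_i\in k^\times$. *)

theory Defs
  imports Main
begin

text \<open>Diagonal quadratic forms over a field: a list of coefficients [a_0,...,a_{n-1}]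
 represents the form x \<mapsto> sum a_i x_i^2 on k^n (vectors are functions nat \<Rightarrow> k,
 only indices < n matter).\<close>

definition diag_qf :: "'a::field list \<Rightarrow> (nat \<Rightarrow> 'a) \<Rightarrow> 'a" where
  "diag_qf as x = (\<Sum>i<length as. as ! i * (x i)^2)"

definition mat_apply :: "nat \<Rightarrow> (nat \<Rightarrow> nat \<Rightarrow> 'a::field) \<Rightarrow> (nat \<Rightarrow> 'a) \<Rightarrow> (nat \<Rightarrow> 'a)" where
  "mat_apply n M x = (\<lambda>i. \<Sum>j<n. M i j * x j)"

definition mat_invertible :: "nat \<Rightarrow> (nat \<Rightarrow> nat \<Rightarrow> 'a::field) \<Rightarrow> bool" where
  "mat_invertible n M \<longleftrightarrow> (\<exists>N. \<forall>i<n. \<forall>j<n.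
      (\<Sum>l<n. M i l * N l j) = (if i = j then 1 else 0) \<and>
      (\<Sum>l<n. N i l * M l j) = (if i = j then 1 else 0))"

definition isometric :: "'a::field list \<Rightarrow> 'a list \<Rightarrow> bool" where
  "isometric as bs \<longleftrightarrow> length as = length bs \<and>
     (\<exists>M. mat_invertible (length as) M \<and>
        (\<forall>x. diag_qf bs (mat_apply (length as) M x) = diag_qf as x))"

text \<open>Equality of the classes of two nondegenerate diagonal forms in GW(k), the Grothendieck
 group of the monoid of isometry classes under orthogonal sum (every nondegenerate form is
 diagonalizable in characteristic \<noteq> 2): [q1] = [q2] iff q1 \<perp> r \<cong> q2 \<perp> r for some r.\<close>
definition gw_eq :: "'a::field list \<Rightarrow> 'a list \<Rightarrow> bool" where
  "gw_eq as bs \<longleftrightarrow> (\<exists>cs. (\<forall>c\<in>set cs. c \<noteq> 0) \<and> isometric (as @ cs) (bs @ cs))"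

definition sum_of_squares :: "'a::field \<Rightarrow> bool" where
  "sum_of_squares \<alpha> \<longleftrightarrow> (\<exists>xs. xs \<noteq> [] \<and> (\<forall>x\<in>set xs. x \<noteq> 0) \<and>
      \<alpha> = sum_list (map (\<lambda>x. x^2) xs))"

end

(* If \<alpha> \<noteq> 0 is a sum of 2^n squares, Pfister's argument, built on the binary isometry
   <u, v> = <u + v, uv(u + v)>, gives 2^n<\<alpha>> = 2^n<1>; since <1, 1> = <2, 2> this yields
   2^(n+1)<1> = 2^n<2, 2\<alpha>> already as an isometry. Conversely, Witt cancellation (proved with
   reflections, using char \<noteq> 2) turns an equality a<1> = b<2, 2\<alpha>> in GW(k) into an isometry;
   then 2\<alpha> is represented by a<1>, i.e. 2\<alpha> = \<Sum> y_i^2, and \<alpha> = \<Sum> ((y_i/2)^2 + (y_i/2)^2). *)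

theory Submission
  imports Defs "HOL-Combinatorics.Permutations"
begin

definition mat_mult :: "nat \<Rightarrow> (nat \<Rightarrow> nat \<Rightarrow> 'a::field) \<Rightarrow> (nat \<Rightarrow> nat \<Rightarrow> 'a) \<Rightarrow> nat \<Rightarrow> nat \<Rightarrow> 'a" where
  "mat_mult n M N = (\<lambda>i j. \<Sum>l<n. M i l * N l j)"

definition unit_vec :: "nat \<Rightarrow> nat \<Rightarrow> 'a::field" where
  "unit_vec j = (\<lambda>i. if i = j then 1 else 0)"

lemma mat_apply_mat_mult: "mat_apply n M (mat_apply n N x) = mat_apply n (mat_mult n M N) x"
  unfolding mat_apply_def mat_mult_def
  by (auto simp: fun_eq_iff sum_distrib_left sum_distrib_right mult.assoc intro: sum.swap)

lemma mat_apply_cong: "(\<And>j. j < n \<Longrightarrow> x j = y j) \<Longrightarrow> mat_apply n M x = mat_apply n M y"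
  unfolding mat_apply_def by (auto intro!: sum.cong)

lemma mat_apply_add_smult:
  "mat_apply n M (\<lambda>i. x i + t * y i) = (\<lambda>i. mat_apply n M x i + t * mat_apply n M y i)"
  unfolding mat_apply_def by (simp add: algebra_simps sum.distrib sum_distrib_left)

lemma mat_apply_smult: "mat_apply n M (\<lambda>i. t * y i) = (\<lambda>i. t * mat_apply n M y i)"
  using mat_apply_add_smult[of n M "\<lambda>i. 0" t y] unfolding mat_apply_def by simp

lemma mat_apply_unit_vec: "j < n \<Longrightarrow> mat_apply n M (unit_vec j) i = M i j"
  unfolding mat_apply_def unit_vec_def by (simp add: if_distrib cong: if_cong)

lemma mat_apply_selection:
  assumes "g i < n"
  shows "mat_apply n (\<lambda>i j. if j = g i then 1 else 0) x i = x (g i)"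
proof -
  have "(\<Sum>j<n. (if j = g i then 1 else 0) * x j) = (\<Sum>j<n. if j = g i then x j else 0)"
    by (rule sum.cong) auto
  also have "\<dots> = x (g i)" using assms by simp
  finally show ?thesis unfolding mat_apply_def .
qed

lemma mat_invertible_iff_inverse_map:
  "mat_invertible n M \<longleftrightarrow> (\<exists>N. (\<forall>x. \<forall>i<n. mat_apply n M (mat_apply n N x) i = x i) \<and>
                                 (\<forall>x. \<forall>i<n. mat_apply n N (mat_apply n M x) i = x i))"
proof -
  have key: "(\<forall>i<n. \<forall>j<n. (\<Sum>l<n. K i l * L l j) = (if i = j then 1 else 0))
      \<longleftrightarrow> (\<forall>x. \<forall>i<n. mat_apply n K (mat_apply n L x) i = x i)" for K L :: "nat \<Rightarrow> nat \<Rightarrow> 'a"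
  proof
    assume unit: "\<forall>i<n. \<forall>j<n. (\<Sum>l<n. K i l * L l j) = (if i = j then 1 else 0)"
    show "\<forall>x. \<forall>i<n. mat_apply n K (mat_apply n L x) i = x i"
    proof (intro allI impI)
      fix x i assume "i < n"
      have "mat_apply n K (mat_apply n L x) i = mat_apply n (\<lambda>i j. if j = id i then 1 else 0) x i"
        unfolding mat_apply_mat_mult unfolding mat_apply_def mat_mult_def using unit \<open>i < n\<close>
        by (intro sum.cong) auto
      also have "\<dots> = x i" using \<open>i < n\<close> by (simp add: mat_apply_selection)
      finally show "mat_apply n K (mat_apply n L x) i = x i" .
    qed
  next
    assume inv: "\<forall>x. \<forall>i<n. mat_apply n K (mat_apply n L x) i = x i"
    show "\<forall>i<n. \<forall>j<n. (\<Sum>l<n. K i l * L l j) = (if i = j then 1 else 0)"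
    proof (intro allI impI)
      fix i j assume "i < n" "j < n"
      then show "(\<Sum>l<n. K i l * L l j) = (if i = j then 1 else 0)"
        using inv[rule_format, of i "unit_vec j"]
        by (simp add: mat_apply_mat_mult mat_apply_unit_vec) (auto simp: mat_mult_def unit_vec_def)
    qed
  qed
  then show ?thesis
    unfolding mat_invertible_def by (simp only: imp_conjR all_conj_distrib key)
qed

section \<open>Isometries of diagonal forms\<close>

lemma isometricI:
  assumes "length as = length bs"
    and "\<And>x i. i < length as \<Longrightarrow> mat_apply (length as) M (mat_apply (length as) N x) i = x i"
    and "\<And>x i. i < length as \<Longrightarrow> mat_apply (length as) N (mat_apply (length as) M x) i = x i"
    and "\<And>x. diag_qf bs (mat_apply (length as) M x) = diag_qf as x"
  shows "isometric as bs"
  unfolding isometric_def mat_invertible_iff_inverse_map using assms by blast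

lemma isometricE:
  assumes "isometric as bs"
  obtains M N where "length as = length bs"
    and "\<And>x i. i < length as \<Longrightarrow> mat_apply (length as) M (mat_apply (length as) N x) i = x i"
    and "\<And>x i. i < length as \<Longrightarrow> mat_apply (length as) N (mat_apply (length as) M x) i = x i"
    and "\<And>x. diag_qf bs (mat_apply (length as) M x) = diag_qf as x"
  using assms unfolding isometric_def mat_invertible_iff_inverse_map by blast

lemma diag_qf_cong: "(\<And>j. j < length as \<Longrightarrow> x j = y j) \<Longrightarrow> diag_qf as x = diag_qf as y"
  unfolding diag_qf_def by (auto intro!: sum.cong)

lemma isometric_sym: "isometric as bs \<Longrightarrow> isometric bs as"
proof -
  assume "isometric as bs"
  obtain M N where L: "length as = length bs"
    and MN: "\<And>x i. i < length as \<Longrightarrow> mat_apply (length as) M (mat_apply (length as) N x) i = x i"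
    and NM: "\<And>x i. i < length as \<Longrightarrow> mat_apply (length as) N (mat_apply (length as) M x) i = x i"
    and iso: "\<And>x. diag_qf bs (mat_apply (length as) M x) = diag_qf as x"
    using isometricE[OF \<open>isometric as bs\<close>] by blast
  have "diag_qf as (mat_apply (length bs) N x)
      = diag_qf bs (mat_apply (length as) M (mat_apply (length as) N x))" for x
    using iso L by simp
  also have "\<dots> x = diag_qf bs x" for x using MN L by (intro diag_qf_cong) auto
  finally show ?thesis
    by (intro isometricI[where M = N and N = M]) (use MN NM L in auto)
qed

lemma isometric_trans [trans]: "isometric as bs \<Longrightarrow> isometric bs cs \<Longrightarrow> isometric as cs"
proof -
  assume "isometric as bs" "isometric bs cs"
  define n where "n = length as"
  obtain M N where L: "length bs = n"
    and MN: "\<And>x i. i < n \<Longrightarrow> mat_apply n M (mat_apply n N x) i = x i"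
    and NM: "\<And>x i. i < n \<Longrightarrow> mat_apply n N (mat_apply n M x) i = x i"
    and iso: "\<And>x. diag_qf bs (mat_apply n M x) = diag_qf as x"
    using isometricE[OF \<open>isometric as bs\<close>] unfolding n_def by metis
  obtain M' N' where L': "length cs = n"
    and MN': "\<And>x i. i < n \<Longrightarrow> mat_apply n M' (mat_apply n N' x) i = x i"
    and NM': "\<And>x i. i < n \<Longrightarrow> mat_apply n N' (mat_apply n M' x) i = x i"
    and iso': "\<And>x. diag_qf cs (mat_apply n M' x) = diag_qf bs x"
    using isometricE[OF \<open>isometric bs cs\<close>] L by metis
  have cancel1: "mat_apply n M' (mat_apply n M (mat_apply n N y)) = mat_apply n M' y" for y
    by (rule mat_apply_cong) (rule MN)
  have cancel2: "mat_apply n N (mat_apply n N' (mat_apply n M' y)) = mat_apply n N y" for y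
    by (rule mat_apply_cong) (rule NM')
  show ?thesis
  proof (rule isometricI[where M = "mat_mult n M' M" and N = "mat_mult n N N'"],
         unfold n_def[symmetric] mat_apply_mat_mult[symmetric])
    show "n = length cs" using L' by simp
  qed (use MN' NM iso iso' cancel1 cancel2 in simp_all)
qed

lemma isometric_scale: "isometric as bs \<Longrightarrow> isometric (map ((*) c) as) (map ((*) c) bs)"
proof -
  assume "isometric as bs"
  obtain M N where "length as = length bs"
    and "\<And>x i. i < length as \<Longrightarrow> mat_apply (length as) M (mat_apply (length as) N x) i = x i"
    and "\<And>x i. i < length as \<Longrightarrow> mat_apply (length as) N (mat_apply (length as) M x) i = x i"
    and "\<And>x. diag_qf bs (mat_apply (length as) M x) = diag_qf as x"
    using isometricE[OF \<open>isometric as bs\<close>] by blast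
  moreover have "diag_qf (map ((*) c) ds) y = c * diag_qf ds y" for ds y
    unfolding diag_qf_def by (simp add: sum_distrib_left mult.assoc)
  ultimately show ?thesis
    by (intro isometricI[where M = M and N = N]) auto
qed

lemma isometric_permute_list:
  assumes p: "p permutes {..<length bs}"
  shows "isometric bs (permute_list p bs)"
proof -
  define n where "n = length bs"
  have p_less: "p i < n" and inv_p_less: "inv p i < n" if "i < n" for i
    using that permutes_in_image[OF p] permutes_in_image[OF permutes_inv[OF p]] n_def by auto
  define M where "M = (\<lambda>i j. if j = p i then 1 else (0::'a))"
  define N where "N = (\<lambda>i j. if j = inv p i then 1 else (0::'a))"
  have M: "mat_apply n M x i = x (p i)" and N: "mat_apply n N x i = x (inv p i)" if "i < n" for x i
    unfolding M_def N_def using mat_apply_selection p_less inv_p_less that by blast+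
  show ?thesis
  proof (rule isometricI[where M = M and N = N], unfold n_def[symmetric])
    fix x i assume "i < n"
    then show "mat_apply n M (mat_apply n N x) i = x i" "mat_apply n N (mat_apply n M x) i = x i"
      by (simp_all add: M N p_less inv_p_less permutes_inverses[OF p])
  next
    fix x
    have "diag_qf (permute_list p bs) (mat_apply n M x) = (\<Sum>i<n. bs ! p i * (x (p i))^2)"
      unfolding diag_qf_def using M permute_list_nth[OF p] n_def by (auto intro!: sum.cong)
    also have "\<dots> = (\<Sum>i<n. bs ! i * (x i)^2)"
      using sum.reindex_bij_betw[OF permutes_imp_bij[OF p], of "\<lambda>i. bs ! i * (x i)^2"] n_def by simp
    finally show "diag_qf (permute_list p bs) (mat_apply n M x) = diag_qf bs x"
      unfolding diag_qf_def n_def .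
  qed (simp add: n_def)
qed

lemma isometric_mset_eq: "mset as = mset bs \<Longrightarrow> isometric as bs"
  using isometric_permute_list isometric_sym mset_eq_permutation by metis

lemma isometric_refl: "isometric as as"
  by (rule isometric_mset_eq) simp

lemma sum_lessThan_add: "(\<Sum>i<m + k. f i) = (\<Sum>i<m. f i) + (\<Sum>i<k. f (m + i :: nat))"
  by (induction k) (simp_all add: add.assoc)

lemma diag_qf_append: "diag_qf (as @ cs) y = diag_qf as y + diag_qf cs (\<lambda>i. y (length as + i))"
  unfolding diag_qf_def by (simp add: sum_lessThan_add nth_append)

definition block_diag :: "nat \<Rightarrow> (nat \<Rightarrow> nat \<Rightarrow> 'a::field) \<Rightarrow> (nat \<Rightarrow> nat \<Rightarrow> 'a) \<Rightarrow> nat \<Rightarrow> nat \<Rightarrow> 'a" where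
  "block_diag m M1 M2 = (\<lambda>i j. if i < m then (if j < m then M1 i j else 0)
                                else (if j < m then 0 else M2 (i - m) (j - m)))"

lemma mat_apply_block_diag_upper:
  "i < m \<Longrightarrow> mat_apply (m + k) (block_diag m M1 M2) x i = mat_apply m M1 x i"
  unfolding mat_apply_def block_diag_def by (simp add: sum_lessThan_add)

lemma mat_apply_block_diag_lower:
  "mat_apply (m + k) (block_diag m M1 M2) x (m + i) = mat_apply k M2 (\<lambda>j. x (m + j)) i"
  unfolding mat_apply_def block_diag_def by (simp add: sum_lessThan_add)

lemma mat_apply_block_diag_inverse:
  assumes "\<And>x i. i < m \<Longrightarrow> mat_apply m M1 (mat_apply m N1 x) i = x i"
    and "\<And>x i. i < k \<Longrightarrow> mat_apply k M2 (mat_apply k N2 x) i = x i"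
    and "i < m + k"
  shows "mat_apply (m + k) (block_diag m M1 M2) (mat_apply (m + k) (block_diag m N1 N2) x) i = x i"
proof (cases "i < m")
  case True
  then have "mat_apply (m + k) (block_diag m M1 M2) (mat_apply (m + k) (block_diag m N1 N2) x) i
      = mat_apply m M1 (mat_apply m N1 x) i"
    by (simp add: mat_apply_block_diag_upper cong: mat_apply_cong)
  then show ?thesis using assms(1) True by simp
next
  case False
  then obtain i' where "i = m + i'" "i' < k" using assms(3) by (metis add_less_cancel_left le_Suc_ex not_less)
  then show ?thesis using assms(2) by (simp add: mat_apply_block_diag_lower)
qed

lemma isometric_append: "isometric as bs \<Longrightarrow> isometric cs ds \<Longrightarrow> isometric (as @ cs) (bs @ ds)"
proof -
  assume "isometric as bs" "isometric cs ds"
  define m where "m = length as"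
  define k where "k = length cs"
  obtain M1 N1 where L1: "length bs = m"
    and MN1: "\<And>x i. i < m \<Longrightarrow> mat_apply m M1 (mat_apply m N1 x) i = x i"
    and NM1: "\<And>x i. i < m \<Longrightarrow> mat_apply m N1 (mat_apply m M1 x) i = x i"
    and iso1: "\<And>x. diag_qf bs (mat_apply m M1 x) = diag_qf as x"
    using isometricE[OF \<open>isometric as bs\<close>] unfolding m_def by metis
  obtain M2 N2 where L2: "length ds = k"
    and MN2: "\<And>x i. i < k \<Longrightarrow> mat_apply k M2 (mat_apply k N2 x) i = x i"
    and NM2: "\<And>x i. i < k \<Longrightarrow> mat_apply k N2 (mat_apply k M2 x) i = x i"
    and iso2: "\<And>x. diag_qf ds (mat_apply k M2 x) = diag_qf cs x"
    using isometricE[OF \<open>isometric cs ds\<close>] unfolding k_def by metis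
  have len: "length (as @ cs) = m + k" using m_def k_def by simp
  have "diag_qf (bs @ ds) (mat_apply (m + k) (block_diag m M1 M2) x)
      = diag_qf bs (mat_apply m M1 x) + diag_qf ds (mat_apply k M2 (\<lambda>j. x (m + j)))" for x
    unfolding diag_qf_append L1 mat_apply_block_diag_lower
    by (subst diag_qf_cong[where y = "mat_apply m M1 x"]) (auto simp: L1 mat_apply_block_diag_upper)
  also have "\<dots> x = diag_qf (as @ cs) x" for x by (simp add: iso1 iso2 diag_qf_append m_def[symmetric])
  finally show ?thesis
    by (intro isometricI[where M = "block_diag m M1 M2" and N = "block_diag m N1 N2"], unfold len)
       (use L1 L2 len mat_apply_block_diag_inverse[OF MN1 MN2]
          mat_apply_block_diag_inverse[OF NM1 NM2] in auto)
qed

section \<open>Binary forms and Pfister's multiplicativity\<close>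

lemma isometric_pairI:
  fixes p q r w :: "'a::field"
  assumes det: "p * w - q * r \<noteq> 0"
    and iso: "\<And>x y. s * (p * x + q * y)^2 + t * (r * x + w * y)^2 = u * x^2 + v * y^2"
  shows "isometric [u, v] [s, t]"
proof -
  define \<delta> where "\<delta> = p * w - q * r"
  define M where "M = (\<lambda>(i::nat) (j::nat). if i = 0 then (if j = 0 then p else q) else (if j = 0 then r else w))"
  define N where "N = (\<lambda>(i::nat) (j::nat). if i = 0 then (if j = 0 then w / \<delta> else - q / \<delta>)
                                   else (if j = 0 then - r / \<delta> else p / \<delta>))"
  have two: "{..<Suc (Suc 0)} = {0, 1}" by auto
  have M: "mat_apply (Suc (Suc 0)) M x = (\<lambda>i. if i = 0 then p * x 0 + q * x 1 else r * x 0 + w * x 1)" for x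
    unfolding mat_apply_def M_def two by auto
  have N: "mat_apply (Suc (Suc 0)) N x = (\<lambda>i. if i = 0 then w / \<delta> * x 0 + - q / \<delta> * x 1
                                   else - r / \<delta> * x 0 + p / \<delta> * x 1)" for x
    unfolding mat_apply_def N_def two by auto
  have diag: "diag_qf [a, b] x = a * (x 0)^2 + b * (x 1)^2" for a b x
    unfolding diag_qf_def two by simp
  have "\<delta> \<noteq> 0" using det \<delta>_def by simp
  then have "p * (w / \<delta> * x + - q / \<delta> * y) + q * (- r / \<delta> * x + p / \<delta> * y) = x"
    "r * (w / \<delta> * x + - q / \<delta> * y) + w * (- r / \<delta> * x + p / \<delta> * y) = y"
    "w / \<delta> * (p * x + q * y) + - q / \<delta> * (r * x + w * y) = x"
    "- r / \<delta> * (p * x + q * y) + p / \<delta> * (r * x + w * y) = y" for x y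
    by (simp_all add: field_simps) (simp_all add: \<delta>_def algebra_simps)
  then show ?thesis
    by (intro isometricI[where M = M and N = N]) (auto simp: M N diag iso less_Suc_eq)
qed

lemma isometric_pair_sum:
  fixes u v :: "'a::field"
  assumes "u + v \<noteq> 0"
  shows "isometric [u, v] [u + v, u * v * (u + v)]"
proof (rule isometric_sym, rule isometric_pairI[where p = 1 and q = v and r = 1 and w = "- u"])
  show "1 * - u - v * 1 \<noteq> 0" using assms by (simp add: neg_eq_iff_add_eq_0)
qed (simp add: power2_eq_square algebra_simps)

lemma isometric_square_one: "a \<noteq> 0 \<Longrightarrow> isometric [a^2] [1]"
proof (rule isometricI[where M = "\<lambda>i j. a" and N = "\<lambda>i j. 1 / a"])
  have "mat_apply 1 (\<lambda>i j. c) x = (\<lambda>i. c * x 0)" "diag_qf [c] x = c * (x 0)^2" for c :: 'a and x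
    unfolding mat_apply_def diag_qf_def by simp_all
  then show "diag_qf [1] (mat_apply (length [a^2]) (\<lambda>i j. a) x) = diag_qf [a^2] x" for x
    by (simp add: power_mult_distrib)
qed (simp_all add: mat_apply_def)

lemma isometric_concat_replicate:
  "isometric as bs \<Longrightarrow> isometric (concat (replicate m as)) (concat (replicate m bs))"
proof (induction m)
  case (Suc m)
  then have "isometric (as @ concat (replicate m as)) (bs @ concat (replicate m bs))"
    by (intro isometric_append)
  then show ?case by simp
qed (simp add: isometric_refl)

lemma mset_concat_replicate_pair:
  "mset (concat (replicate m [a, b])) = mset (replicate m a @ replicate m b)"
  by (induction m) auto

text \<open>Splitting \<open>\<alpha> = u + v\<close> into two sums of \<open>2^(n-1)\<close> squares, induction gives
  \<open>2^(n-1)\<langle>uv\<rangle> \<cong> 2^(n-1)\<langle>1\<rangle>\<close>, and \<open>\<langle>\<alpha>, \<alpha>uv\<rangle> \<cong> \<langle>u, v\<rangle>\<close> does the rest.\<close>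
lemma isometric_replicate_sum_squares:
  fixes \<alpha> :: "'a::field" and f :: "nat \<Rightarrow> 'a"
  assumes "\<alpha> \<noteq> 0" and "\<alpha> = (\<Sum>i<2^n. (f i)^2)"
  shows "isometric (replicate (2^n) \<alpha>) (replicate (2^n) 1)"
  using assms
proof (induction n arbitrary: \<alpha> f)
  case 0
  then show ?case using isometric_square_one[of "f 0"] by simp
next
  case (Suc n)
  define m :: nat where "m = 2^n"
  define R where "R = (\<lambda>x::'a. replicate m x)"
  define u where "u = (\<Sum>i<m. (f i)^2)"
  define v where "v = (\<Sum>i<m. (f (m + i))^2)"
  have m2: "(2::nat)^Suc n = m + m" using m_def by simp
  have \<alpha>: "\<alpha> = u + v" using Suc.prems(2) unfolding m2 u_def v_def by (simp add: sum_lessThan_add)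
  have "isometric (R \<alpha> @ R \<alpha>) (R 1 @ R 1)"
  proof (cases "u = 0 \<or> v = 0")
    case True
    then have "\<alpha> = (\<Sum>i<2^n. (f i)^2) \<or> \<alpha> = (\<Sum>i<2^n. (f (m + i))^2)"
      using \<alpha> u_def v_def m_def by auto
    then have "isometric (R \<alpha>) (R 1)"
      unfolding R_def m_def by (elim disjE) (erule Suc.IH[OF Suc.prems(1)])+
    then show ?thesis by (intro isometric_append)
  next
    case False
    then have u: "isometric (R u) (R 1)" and v: "isometric (R v) (R 1)"
      using Suc.IH[OF _ u_def[unfolded m_def]] Suc.IH[OF _ v_def[unfolded m_def]]
      unfolding R_def m_def by simp_all
    have "isometric (R (u * v)) (R u)"
      using isometric_scale[OF v, of u] unfolding R_def by simp
    then have "isometric (R (u * v)) (R 1)" using u by (rule isometric_trans)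
    then have uv: "isometric (R (\<alpha> * (u * v))) (R \<alpha>)"
      using isometric_scale[of "R (u * v)" "R 1" \<alpha>] unfolding R_def by simp
    have "isometric (R \<alpha> @ R \<alpha>) (R \<alpha> @ R (\<alpha> * (u * v)))"
      by (intro isometric_append isometric_refl isometric_sym[OF uv])
    also have "isometric (R \<alpha> @ R (\<alpha> * (u * v))) (concat (replicate m [\<alpha>, \<alpha> * (u * v)]))"
      unfolding R_def by (rule isometric_mset_eq) (simp add: mset_concat_replicate_pair)
    also have "isometric (concat (replicate m [\<alpha>, \<alpha> * (u * v)])) (concat (replicate m [u, v]))"
      using isometric_pair_sum[of u v] Suc.prems(1) unfolding \<alpha>
      by (intro isometric_concat_replicate) (rule isometric_sym, simp add: mult.commute)
    also have "isometric (concat (replicate m [u, v])) (R u @ R v)"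
      unfolding R_def by (rule isometric_mset_eq) (simp add: mset_concat_replicate_pair)
    also have "isometric (R u @ R v) (R 1 @ R 1)" by (intro isometric_append u v)
    finally show ?thesis .
  qed
  then show ?case unfolding m2 R_def by (simp add: replicate_add)
qed

lemma gw_eq_of_sum_of_squares:
  fixes \<alpha> :: "'a::field"
  assumes "(2::'a) \<noteq> 0" and "\<alpha> \<noteq> 0" and "sum_of_squares \<alpha>"
  obtains m where "m > 0" and "gw_eq (replicate (2 * m) 1) (concat (replicate m [2, 2 * \<alpha>]))"
proof -
  obtain xs where "xs \<noteq> []" and xs: "\<alpha> = sum_list (map (\<lambda>x. x^2) xs)"
    using assms(3) unfolding sum_of_squares_def by blast
  define L where "L = length xs"
  define m :: nat where "m = 2^L"
  define f where "f = (\<lambda>i. if i < L then xs ! i else 0)"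
  have "L \<le> m" using less_exp[of L] m_def by simp
  have "\<alpha> = (\<Sum>i<L. (f i)^2) + (\<Sum>i<m - L. (f (L + i))^2)"
    using xs unfolding L_def f_def by (simp add: sum_list_sum_nth atLeast0LessThan)
  then have "\<alpha> = (\<Sum>i<m. (f i)^2)" using sum_lessThan_add[of "\<lambda>i. (f i)^2" L "m - L"] \<open>L \<le> m\<close> by simp
  then have \<alpha>: "isometric (replicate m 1) (replicate m \<alpha>)"
    using isometric_replicate_sum_squares[OF assms(2)] m_def isometric_sym by blast
  have "isometric (replicate (2 * m) 1) (concat (replicate m [1, 1]))"
    by (rule isometric_mset_eq) (simp add: mset_concat_replicate_pair mult_2 replicate_add)
  also have "isometric (concat (replicate m [1, 1])) (concat (replicate m [2, 2::'a]))"
    using isometric_pair_sum[of "1::'a" 1] assms(1) by (intro isometric_concat_replicate) simp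
  also have "isometric (concat (replicate m [2, 2::'a])) (replicate m 2 @ replicate m 2)"
    by (rule isometric_mset_eq) (simp add: mset_concat_replicate_pair)
  also have "isometric (replicate m 2 @ replicate m (2::'a)) (replicate m 2 @ replicate m (2 * \<alpha>))"
    using isometric_scale[OF \<alpha>, of 2] by (intro isometric_append isometric_refl) simp
  also have "isometric (replicate m 2 @ replicate m (2 * \<alpha>)) (concat (replicate m [2, 2 * \<alpha>]))"
    by (rule isometric_mset_eq) (simp add: mset_concat_replicate_pair)
  finally have "gw_eq (replicate (2 * m) 1) (concat (replicate m [2, 2 * \<alpha>]))"
    unfolding gw_eq_def by (intro exI[of _ "[]"]) simp
  moreover have "m > 0" using m_def by simp
  ultimately show ?thesis using that by blast
qed

section \<open>Reflections and Witt cancellation\<close>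

definition diag_bil :: "'a::field list \<Rightarrow> (nat \<Rightarrow> 'a) \<Rightarrow> (nat \<Rightarrow> 'a) \<Rightarrow> 'a" where
  "diag_bil D x y = (\<Sum>i<length D. D ! i * x i * y i)"

lemma diag_qf_eq_diag_bil: "diag_qf D x = diag_bil D x x"
  unfolding diag_qf_def diag_bil_def by (simp add: power2_eq_square mult.assoc)

lemma diag_bil_commute: "diag_bil D x y = diag_bil D y x"
  unfolding diag_bil_def by (simp add: ac_simps)

lemma diag_bil_cong:
  "(\<And>j. j < length D \<Longrightarrow> x j = x' j) \<Longrightarrow> (\<And>j. j < length D \<Longrightarrow> y j = y' j)
    \<Longrightarrow> diag_bil D x y = diag_bil D x' y'"
  unfolding diag_bil_def by (auto intro!: sum.cong)

lemma diag_bil_add_smult_left: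
  "diag_bil D (\<lambda>i. y i + t * z i) w = diag_bil D y w + t * diag_bil D z w"
  unfolding diag_bil_def by (simp add: algebra_simps sum.distrib sum_distrib_left)

lemma diag_bil_smult_right: "diag_bil D y (\<lambda>i. t * z i) = t * diag_bil D y z"
  unfolding diag_bil_def by (simp add: ac_simps sum_distrib_left)

lemma diag_bil_unit_vec: "j < length D \<Longrightarrow> diag_bil D y (unit_vec j) = D ! j * y j"
  unfolding diag_bil_def unit_vec_def by (simp add: if_distrib cong: if_cong)

lemma diag_qf_add_smult:
  "diag_qf D (\<lambda>i. y i + t * z i) = diag_qf D y + 2 * t * diag_bil D y z + t^2 * diag_qf D z"
  unfolding diag_qf_eq_diag_bil diag_bil_add_smult_left
    diag_bil_commute[of D _ "\<lambda>i. y i + t * z i"] diag_bil_commute[of D z y]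
  by (simp add: algebra_simps power2_eq_square)

lemma diag_bil_mat_apply:
  fixes D1 D2 :: "'a::field list"
  assumes "(2::'a) \<noteq> 0" and iso: "\<And>x. diag_qf D2 (mat_apply n M x) = diag_qf D1 x"
  shows "diag_bil D2 (mat_apply n M x) (mat_apply n M y) = diag_bil D1 x y"
proof -
  have "2 * diag_bil D2 (mat_apply n M x) (mat_apply n M y)
     = diag_qf D2 (mat_apply n M (\<lambda>i. x i + 1 * y i))
       - diag_qf D2 (mat_apply n M x) - diag_qf D2 (mat_apply n M y)"
    unfolding mat_apply_add_smult diag_qf_add_smult by simp
  also have "\<dots> = 2 * diag_bil D1 x y" unfolding iso diag_qf_add_smult by simp
  finally show ?thesis using assms(1) by simp
qed

definition reflection :: "'a::field list \<Rightarrow> (nat \<Rightarrow> 'a) \<Rightarrow> (nat \<Rightarrow> 'a) \<Rightarrow> nat \<Rightarrow> 'a" where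
  "reflection D z y = (\<lambda>i. y i + (- (2 * diag_bil D y z / diag_qf D z)) * z i)"

definition reflection_matrix :: "'a::field list \<Rightarrow> (nat \<Rightarrow> 'a) \<Rightarrow> nat \<Rightarrow> nat \<Rightarrow> 'a" where
  "reflection_matrix D z = (\<lambda>i j. (if i = j then 1 else 0) + (- 2 * z i / diag_qf D z) * (D ! j * z j))"

lemma mat_apply_reflection_matrix:
  assumes "i < length D"
  shows "mat_apply (length D) (reflection_matrix D z) y i = reflection D z y i"
proof -
  define k where "k = - 2 * z i / diag_qf D z"
  have "mat_apply (length D) (reflection_matrix D z) y i
      = (\<Sum>j<length D. (if i = j then y j else 0) + k * (D ! j * y j * z j))"
    unfolding mat_apply_def reflection_matrix_def k_def by (rule sum.cong) (auto simp: algebra_simps)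
  also have "\<dots> = (\<Sum>j<length D. (if i = j then y j else 0)) + k * (\<Sum>j<length D. D ! j * y j * z j)"
    by (simp only: sum.distrib sum_distrib_left)
  also have "\<dots> = y i + k * diag_bil D y z" using assms by (simp add: diag_bil_def)
  finally show ?thesis unfolding reflection_def k_def by (simp add: algebra_simps)
qed

lemma diag_qf_reflection: "diag_qf D z \<noteq> 0 \<Longrightarrow> diag_qf D (reflection D z y) = diag_qf D y"
  unfolding reflection_def diag_qf_add_smult by (simp add: power2_eq_square field_simps)

lemma diag_bil_reflection: "diag_qf D z \<noteq> 0 \<Longrightarrow> diag_bil D (reflection D z y) z = - diag_bil D y z"
  unfolding reflection_def diag_bil_add_smult_left diag_qf_eq_diag_bil by (simp add: field_simps)

lemma reflection_reflection: "diag_qf D z \<noteq> 0 \<Longrightarrow> reflection D z (reflection D z y) = y"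
  using diag_bil_reflection[of D z y] unfolding reflection_def by (simp add: fun_eq_iff algebra_simps)

text \<open>Of the two vectors \<open>w \<mp> e\<close> at least one is anisotropic, because their norms add up to
  \<open>4Q(e) \<noteq> 0\<close>; the reflection along it sends \<open>w\<close> to \<open>\<plusminus>e\<close>.\<close>
lemma reflection_onto_line:
  fixes D :: "'a::field list"
  assumes two: "(2::'a) \<noteq> 0" and Qw: "diag_qf D w = diag_qf D e" and Qe: "diag_qf D e \<noteq> 0"
  obtains \<epsilon> z where "\<epsilon> * \<epsilon> = 1" and "diag_qf D z \<noteq> 0" and "reflection D z w = (\<lambda>i. \<epsilon> * e i)"
proof -
  define \<beta> where "\<beta> = diag_bil D w e"
  have Q: "diag_qf D (\<lambda>i. w i + (- t) * e i) = 2 * diag_qf D e - 2 * t * \<beta>" if "t * t = 1" for t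
    unfolding diag_qf_add_smult Qw \<beta>_def using that by (simp add: power2_eq_square algebra_simps)
  obtain \<epsilon> :: 'a where \<epsilon>: "\<epsilon> * \<epsilon> = 1" and Qz: "diag_qf D (\<lambda>i. w i + (- \<epsilon>) * e i) \<noteq> 0"
  proof (cases "diag_qf D (\<lambda>i. w i + (- 1) * e i) = 0")
    case True
    have "(4::'a) \<noteq> 0" using two by (metis mult_2 mult_eq_0_iff numeral_Bit0 one_add_one)
    moreover have "diag_qf D (\<lambda>i. w i + (- (- 1)) * e i) = 4 * diag_qf D e"
      using True Q[of 1] Q[of "- 1"] two by (simp add: algebra_simps)
    ultimately have "diag_qf D (\<lambda>i. w i + (- (- 1)) * e i) \<noteq> 0" using Qe by simp
    then show ?thesis using that[of "- 1"] by simp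
  next
    case False
    then show ?thesis using that[of 1] by simp
  qed
  define z where "z = (\<lambda>i. w i + (- \<epsilon>) * e i)"
  have "diag_bil D z w = diag_qf D e - \<epsilon> * \<beta>"
    unfolding z_def diag_bil_add_smult_left \<beta>_def diag_qf_eq_diag_bil[symmetric] Qw
    by (simp add: diag_bil_commute[of D e])
  then have "2 * diag_bil D w z / diag_qf D z = 1"
    using Q[OF \<epsilon>] Qz unfolding diag_bil_commute[of D w z] unfolding z_def by simp
  then have "reflection D z w = (\<lambda>i. \<epsilon> * e i)"
    unfolding reflection_def z_def by (simp add: fun_eq_iff)
  moreover have "diag_qf D z \<noteq> 0" using Qz unfolding z_def .
  ultimately show ?thesis using \<epsilon> that by blast
qed

lemma diag_qf_unit_vec: "j < length D \<Longrightarrow> diag_qf D (unit_vec j) = D ! j"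
  by (simp add: diag_qf_eq_diag_bil diag_bil_unit_vec) (simp add: unit_vec_def)

lemma diag_qf_append_singleton: "diag_qf (A @ [c]) y = diag_qf A y + c * (y (length A))^2"
  unfolding diag_qf_def by (simp add: nth_append)

text \<open>The hyperplane \<open>x\<^sub>n = 0\<close> is the orthogonal complement of the last axis.\<close>
lemma isometry_preserves_last_hyperplane:
  fixes A B :: "'a::field list"
  assumes two: "(2::'a) \<noteq> 0" and LA: "length A = n" and LB: "length B = n"
    and "c \<noteq> 0" and "\<epsilon> \<noteq> 0"
    and iso: "\<And>x. diag_qf (B @ [c]) (mat_apply (Suc n) N x) = diag_qf (A @ [c]) x"
    and axis: "\<And>i. i < Suc n \<Longrightarrow> mat_apply (Suc n) N (unit_vec n) i = \<epsilon> * unit_vec n i"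
    and "x n = 0"
  shows "mat_apply (Suc n) N x n = 0"
proof -
  have "diag_bil (B @ [c]) (mat_apply (Suc n) N x) (\<lambda>i. \<epsilon> * unit_vec n i)
      = diag_bil (B @ [c]) (mat_apply (Suc n) N x) (mat_apply (Suc n) N (unit_vec n))"
    using LB axis by (intro diag_bil_cong) auto
  also have "\<dots> = diag_bil (A @ [c]) x (unit_vec n)" by (rule diag_bil_mat_apply[OF two iso])
  also have "\<dots> = 0" using LA \<open>x n = 0\<close> by (simp add: diag_bil_unit_vec)
  finally show ?thesis
    using LB \<open>c \<noteq> 0\<close> \<open>\<epsilon> \<noteq> 0\<close> by (simp add: diag_bil_smult_right diag_bil_unit_vec nth_append)
qed

lemma isometric_restrict_hyperplane:
  fixes A B :: "'a::field list"
  assumes LA: "length A = n" and LB: "length B = n"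
    and iso: "\<And>x. diag_qf (B @ [c]) (mat_apply (Suc n) N x) = diag_qf (A @ [c]) x"
    and NP: "\<And>x i. i < Suc n \<Longrightarrow> mat_apply (Suc n) N (mat_apply (Suc n) P x) i = x i"
    and PN: "\<And>x i. i < Suc n \<Longrightarrow> mat_apply (Suc n) P (mat_apply (Suc n) N x) i = x i"
    and hN: "\<And>x. x n = 0 \<Longrightarrow> mat_apply (Suc n) N x n = 0"
    and hP: "\<And>x. x n = 0 \<Longrightarrow> mat_apply (Suc n) P x n = 0"
  shows "isometric A B"
proof -
  define ext :: "(nat \<Rightarrow> 'a) \<Rightarrow> nat \<Rightarrow> 'a" where "ext = (\<lambda>x i. if i = n then 0 else x i)"
  have restrict: "mat_apply n K x = mat_apply (Suc n) K (ext x)" for K :: "nat \<Rightarrow> nat \<Rightarrow> 'a" and x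
  proof -
    have "mat_apply (Suc n) K (ext x) = mat_apply n K (ext x)"
      unfolding mat_apply_def ext_def by (simp add: fun_eq_iff)
    also have "\<dots> = mat_apply n K x" by (rule mat_apply_cong) (simp add: ext_def)
    finally show ?thesis by simp
  qed
  have inverse: "mat_apply n K (mat_apply n L x) i = x i"
    if hL: "\<And>x. x n = 0 \<Longrightarrow> mat_apply (Suc n) L x n = 0"
      and KL: "\<And>x i. i < Suc n \<Longrightarrow> mat_apply (Suc n) K (mat_apply (Suc n) L x) i = x i"
      and "i < n" for K L :: "nat \<Rightarrow> nat \<Rightarrow> 'a" and x i
  proof -
    have "ext (mat_apply n L x) = mat_apply (Suc n) L (ext x)"
      using hL[of "ext x"] by (auto simp: restrict ext_def fun_eq_iff)
    then have "mat_apply n K (mat_apply n L x) = mat_apply (Suc n) K (mat_apply (Suc n) L (ext x))"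
      by (simp add: restrict)
    then show ?thesis using KL[of i "ext x"] \<open>i < n\<close> by (simp add: ext_def)
  qed
  have "diag_qf B (mat_apply n N x) = diag_qf A x" for x
  proof -
    have "diag_qf B (mat_apply n N x) = diag_qf (B @ [c]) (mat_apply (Suc n) N (ext x))"
      using hN[of "ext x"] LB by (simp add: restrict ext_def diag_qf_append_singleton)
    also have "\<dots> = diag_qf (A @ [c]) (ext x)" by (rule iso)
    also have "\<dots> = diag_qf A x"
      using LA by (simp add: diag_qf_append_singleton ext_def) (rule diag_qf_cong, simp)
    finally show ?thesis .
  qed
  then show ?thesis
    by (intro isometricI[where M = N and N = P]) (use LA LB inverse[OF hP NP] inverse[OF hN PN] in auto)
qed

lemma isometric_cancel_last:
  fixes A B :: "'a::field list"
  assumes two: "(2::'a) \<noteq> 0" and "c \<noteq> 0" and "isometric (A @ [c]) (B @ [c])"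
  shows "isometric A B"
proof -
  define n where "n = length A"
  define D1 where "D1 = A @ [c]"
  define D2 where "D2 = B @ [c]"
  obtain M Mi where L: "length D2 = Suc n"
    and MMi: "\<And>x i. i < Suc n \<Longrightarrow> mat_apply (Suc n) M (mat_apply (Suc n) Mi x) i = x i"
    and MiM: "\<And>x i. i < Suc n \<Longrightarrow> mat_apply (Suc n) Mi (mat_apply (Suc n) M x) i = x i"
    and isoM: "\<And>x. diag_qf D2 (mat_apply (Suc n) M x) = diag_qf D1 x"
    using isometricE[OF \<open>isometric (A @ [c]) (B @ [c])\<close>] unfolding n_def D1_def D2_def
    by (metis length_append_singleton)
  have LA: "length A = n" and LB: "length B = n" using n_def L D2_def by simp_all
  define e :: "nat \<Rightarrow> 'a" where "e = unit_vec n"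
  have "diag_qf D1 e = c" "diag_qf D2 e = c"
    using LA LB by (simp_all add: e_def D1_def D2_def diag_qf_unit_vec nth_append)
  then have "diag_qf D2 (mat_apply (Suc n) M e) = diag_qf D2 e" and "diag_qf D2 e \<noteq> 0"
    using isoM \<open>c \<noteq> 0\<close> by simp_all
  then obtain \<epsilon> z where \<epsilon>: "\<epsilon> * \<epsilon> = 1" and Qz: "diag_qf D2 z \<noteq> 0"
    and Mz: "reflection D2 z (mat_apply (Suc n) M e) = (\<lambda>i. \<epsilon> * e i)"
    by (rule reflection_onto_line[OF two])
  have \<epsilon>0: "\<epsilon> \<noteq> 0" using \<epsilon> by auto
  define S where "S = reflection_matrix D2 z"
  have S: "mat_apply (Suc n) S y i = reflection D2 z y i" if "i < Suc n" for y i
    using mat_apply_reflection_matrix[of i D2 z y] that L unfolding S_def by simp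
  have SS: "mat_apply (Suc n) S (mat_apply (Suc n) S y) i = y i" if "i < Suc n" for y i
  proof -
    have "mat_apply (Suc n) S (mat_apply (Suc n) S y) = mat_apply (Suc n) S (reflection D2 z y)"
      by (rule mat_apply_cong) (simp add: S)
    then show ?thesis using S[OF that] reflection_reflection[OF Qz] by simp
  qed
  text \<open>\<open>N = SM\<close> is an isometry fixing the last axis up to sign; \<open>P = M\<^sup>-\<^sup>1S\<close> is its inverse.\<close>
  define N where "N = mat_mult (Suc n) S M"
  define P where "P = mat_mult (Suc n) Mi S"
  have N: "mat_apply (Suc n) N x i = reflection D2 z (mat_apply (Suc n) M x) i" if "i < Suc n" for x i
    unfolding N_def mat_apply_mat_mult[symmetric] using S[OF that] .
  have isoN: "diag_qf D2 (mat_apply (Suc n) N x) = diag_qf D1 x" for x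
  proof -
    have "diag_qf D2 (mat_apply (Suc n) N x) = diag_qf D2 (reflection D2 z (mat_apply (Suc n) M x))"
      by (rule diag_qf_cong) (simp add: L N)
    then show ?thesis using diag_qf_reflection[OF Qz] isoM by simp
  qed
  have NP: "mat_apply (Suc n) N (mat_apply (Suc n) P x) i = x i" if "i < Suc n" for x i
  proof -
    have "mat_apply (Suc n) N (mat_apply (Suc n) P x)
        = mat_apply (Suc n) S (mat_apply (Suc n) M (mat_apply (Suc n) Mi (mat_apply (Suc n) S x)))"
      by (simp only: N_def P_def mat_apply_mat_mult[symmetric])
    also have "\<dots> = mat_apply (Suc n) S (mat_apply (Suc n) S x)" by (rule mat_apply_cong) (rule MMi)
    finally show ?thesis using SS that by simp
  qed
  have PN: "mat_apply (Suc n) P (mat_apply (Suc n) N x) i = x i" if "i < Suc n" for x i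
  proof -
    have "mat_apply (Suc n) P (mat_apply (Suc n) N x)
        = mat_apply (Suc n) Mi (mat_apply (Suc n) S (mat_apply (Suc n) S (mat_apply (Suc n) M x)))"
      by (simp only: N_def P_def mat_apply_mat_mult[symmetric])
    also have "\<dots> = mat_apply (Suc n) Mi (mat_apply (Suc n) M x)" by (rule mat_apply_cong) (rule SS)
    finally show ?thesis using MiM that by simp
  qed
  have isoP: "diag_qf D1 (mat_apply (Suc n) P y) = diag_qf D2 y" for y
  proof -
    have "diag_qf D1 (mat_apply (Suc n) P y) = diag_qf D2 (mat_apply (Suc n) N (mat_apply (Suc n) P y))"
      using isoN by simp
    also have "\<dots> = diag_qf D2 y" by (rule diag_qf_cong) (simp add: L NP)
    finally show ?thesis .
  qed
  have Ne: "mat_apply (Suc n) N e i = \<epsilon> * e i" if "i < Suc n" for i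
    using N[OF that, of e] Mz by simp
  have Pe: "mat_apply (Suc n) P e i = 1 / \<epsilon> * e i" if "i < Suc n" for i
  proof -
    have "mat_apply (Suc n) P (mat_apply (Suc n) N e) = mat_apply (Suc n) P (\<lambda>i. \<epsilon> * e i)"
      by (rule mat_apply_cong) (rule Ne)
    then have "e i = \<epsilon> * mat_apply (Suc n) P e i" using PN[OF that, of e] by (simp add: mat_apply_smult)
    then show ?thesis using \<epsilon>0 by (simp add: field_simps)
  qed
  have "mat_apply (Suc n) N x n = 0" if "x n = 0" for x
    using isometry_preserves_last_hyperplane[OF two LA LB \<open>c \<noteq> 0\<close> \<epsilon>0 isoN[unfolded D1_def D2_def]]
      Ne that unfolding e_def by blast
  moreover have "mat_apply (Suc n) P x n = 0" if "x n = 0" for x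
    using isometry_preserves_last_hyperplane[OF two LB LA \<open>c \<noteq> 0\<close> _ isoP[unfolded D1_def D2_def]]
      \<epsilon>0 Pe that unfolding e_def by (metis divide_eq_0_iff one_neq_zero)
  ultimately show ?thesis
    using isometric_restrict_hyperplane[OF LA LB isoN[unfolded D1_def D2_def] NP PN] by blast
qed

theorem witt_cancellation:
  fixes A B :: "'a::field list"
  assumes "(2::'a) \<noteq> 0" and "\<forall>c\<in>set cs. c \<noteq> 0" and "isometric (A @ cs) (B @ cs)"
  shows "isometric A B"
  using assms(2,3)
proof (induction cs rule: rev_induct)
  case (snoc c cs)
  then show ?case using isometric_cancel_last[OF assms(1), of c "A @ cs" "B @ cs"] by simp
qed simp

lemma sum_list_squares_filter_nonzero:
  "sum_list (map (\<lambda>x. x^2) (filter (\<lambda>x. x \<noteq> 0) xs)) = sum_list (map (\<lambda>x. (x::'a::field)^2) xs)"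
  by (induction xs) auto

lemma sum_of_squares_of_double:
  fixes \<alpha> :: "'a::field" and a :: nat
  assumes "(2::'a) \<noteq> 0" and "\<alpha> \<noteq> 0" and "2 * \<alpha> = (\<Sum>i<a. (y i)^2)"
  shows "sum_of_squares \<alpha>"
proof -
  define xs where "xs = filter (\<lambda>x. x \<noteq> 0) (concat (map (\<lambda>i. [y i / 2, y i / 2]) [0..<a]))"
  have "sum_list (map (\<lambda>x. x^2) (concat (map (\<lambda>i. [t i, t i]) [0..<a]))) = (\<Sum>i<a. 2 * (t i)^2)"
    for t :: "nat \<Rightarrow> 'a"
    by (induction a) auto
  then have "sum_list (map (\<lambda>x. x^2) xs) = (\<Sum>i<a. (y i)^2) / 2"
    unfolding xs_def sum_list_squares_filter_nonzero sum_divide_distrib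
    using assms(1) by (simp add: power_divide power2_eq_square field_simps)
  also have "\<dots> = \<alpha>" using assms(1) by (simp add: assms(3)[symmetric])
  finally have "\<alpha> = sum_list (map (\<lambda>x. x^2) xs)" ..
  moreover have "xs \<noteq> []" using \<open>\<alpha> \<noteq> 0\<close> calculation by auto
  ultimately show ?thesis unfolding sum_of_squares_def xs_def by auto
qed

lemma sum_of_squares_of_gw_eq:
  fixes \<alpha> :: "'a::field"
  assumes two: "(2::'a) \<noteq> 0" and "\<alpha> \<noteq> 0" and "b > 0"
    and "gw_eq (replicate a 1) (concat (replicate b [2, 2 * \<alpha>]))"
  shows "sum_of_squares \<alpha>"
proof -
  define bs where "bs = concat (replicate b [2, 2 * \<alpha>])"
  obtain cs where "\<forall>c\<in>set cs. c \<noteq> 0" and "isometric (replicate a 1 @ cs) (bs @ cs)"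
    using assms(4) unfolding gw_eq_def bs_def by blast
  then have "isometric bs (replicate a 1)" by (rule isometric_sym[OF witt_cancellation[OF two]])
  then obtain M where L: "length bs = a"
    and iso: "\<And>x. diag_qf (replicate a 1) (mat_apply (length bs) M x) = diag_qf bs x"
    using isometricE by (metis length_replicate)
  have "1 < length bs" and "bs ! 1 = 2 * \<alpha>" using \<open>b > 0\<close> unfolding bs_def by (cases b; simp)+
  then have "diag_qf (replicate a 1) (mat_apply (length bs) M (unit_vec 1)) = 2 * \<alpha>"
    by (simp add: iso diag_qf_unit_vec)
  then have "2 * \<alpha> = (\<Sum>i<a. (mat_apply (length bs) M (unit_vec 1) i)^2)"
    by (simp add: diag_qf_def)
  then show ?thesis by (rule sum_of_squares_of_double[OF two \<open>\<alpha> \<noteq> 0\<close>])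
qed

theorem lemma2p4:
  fixes \<alpha> :: "'a::field"
  assumes "(2::'a) \<noteq> 0" and "\<alpha> \<noteq> 0"
  shows "(\<exists>a b::nat. a > 0 \<and> b > 0 \<and>
            gw_eq (replicate a 1) (concat (replicate b [2, 2 * \<alpha>])))
         \<longleftrightarrow> sum_of_squares \<alpha>"
proof
  assume "\<exists>a b::nat. a > 0 \<and> b > 0 \<and> gw_eq (replicate a 1) (concat (replicate b [2, 2 * \<alpha>]))"
  then show "sum_of_squares \<alpha>" using sum_of_squares_of_gw_eq[OF assms] by blast
next
  assume "sum_of_squares \<alpha>"
  then obtain m where "m > 0" and "gw_eq (replicate (2 * m) 1) (concat (replicate m [2, 2 * \<alpha>]))"
    using gw_eq_of_sum_of_squares[OF assms] by blast
  then show "\<exists>a b::nat. a > 0 \<and> b > 0 \<and> gw_eq (replicate a 1) (concat (replicate b [2, 2 * \<alpha>]))"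
    by (intro exI[of _ "2 * m"] exI[of _ m]) simp
qed

end
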